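(* Let $\{\mathscr E_1,\dots,\mathscr E_{\mathfrak n},\Delta\}$, $\mathfrak n\ge2$, be a partition of $E$ not depending on $N$, and $\alpha_N,\theta_N$ positive sequences with $\alpha_N/\theta_N\to0$, such that (H1) and (H2) hold with $(a_N,b_N)=(\alpha_N,\theta_N)$. Then for every $x$ such that $\mathscr E_x$ is not a singleton and all $\eta\neq\xi\in\mathscr E_x$, $$\lim_{N\to\infty}\frac{\mathrm{Cap}_N(\mathscr E_x,\breve{\mathscr E}_x)}{\mathrm{Cap}_N(\eta,\xi)}=0,\qquad \breve{\mathscr E}_x=\bigcup_{y\ne x}\mathscr E_y.$$
   Context: Setting: $E$ is a fixed finite set. For each $N\ge1$, $(\eta^N_t)_{t\ge0}$ is a continuous-time irreducible Markov chain on $E$ with jump rates $R_N(\eta,\xi)$, holding rates $\lambda_N(\eta)=\sum_{\xi\neq\eta}R_N(\eta,\xi)$ and unique invariant probability measure $\mu_N$; $\mathbb P_\eta$ denotes the law started at $\eta$. For $A\subset E$, $H_A=\inf\{t>0:\eta^N_t\in A\}$, $H^+_A=\inf\{t>\tau_1:\eta^N_t\in A\}$, $\tau_1$ the first jump time. For disjoint nonempty $A,B$, $\mathrm{Cap}_N(A,B)=\sum_{\eta\in A}\mu_N(\eta)\lambda_N(\eta)\mathbb P_\eta[H_B<H^+_A]$, $\mathrm{Cap}_N(\eta,\xi)=\mathrm{Cap}_N(\{\eta\},\{\xi\})$. For nonempty $F\subset E$ the trace on $F$ is $\eta^F_t=\eta^N_{S_F(t)}$, $S_F(t)=\sup\{s:\int_0^s\mathbf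 1\{\eta^N_r\in F\}dr\le t\}$, an irreducible Markov chain on $F$ with jump rates $R^F_N$. Conditions: with $\mathscr E=\bigcup_x\mathscr E_x$ and $r^{\mathscr E}_N(\mathscr E_x,\mathscr E_y)=\mu_N(\mathscr E_x)^{-1}\sum_{\eta\in\mathscr E_x}\mu_N(\eta)\sum_{\xi\in\mathscr E_y}R^{\mathscr E}_N(\eta,\xi)$, (H1) for all $x\neq y$, $r_{\mathscr E}(x,y):=\lim_N b_Nr^{\mathscr E}_N(\mathscr E_x,\mathscr E_y)$ exists in $[0,\infty)$ and $\sum_x\sum_{y\ne x}r_{\mathscr E}(x,y)>0$; (H2) for each $x$ with $|\mathscr E_x|\ge2$ and $\eta\ne\xi\in\mathscr E_x$, $\liminf_N a_N\mathrm{Cap}_N(\eta,\xi)/\mu_N(\mathscr E_x)>0$. *)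

theory Defs
  imports "HOL-Analysis.Analysis"
begin

text \<open>A continuous-time Markov chain on the finite type 'a is given by its jump rates
  R :: 'a => 'a => real (diagonal entries are ignored).\<close>

definition hold_rate :: "('a::finite \<Rightarrow> 'a \<Rightarrow> real) \<Rightarrow> 'a \<Rightarrow> real" where
  "hold_rate R \<eta> = (\<Sum>\<xi>\<in>UNIV - {\<eta>}. R \<eta> \<xi>)"

definition rates_ok :: "('a::finite \<Rightarrow> 'a \<Rightarrow> real) \<Rightarrow> bool" where
  "rates_ok R \<longleftrightarrow> (\<forall>\<eta> \<xi>. \<eta> \<noteq> \<xi> \<longrightarrow> 0 \<le> R \<eta> \<xi>)"

definition irreducible_rates :: "('a::finite \<Rightarrow> 'a \<Rightarrow> real) \<Rightarrow> bool" where
  "irreducible_rates R \<longleftrightarrow>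
     (\<forall>\<eta> \<xi>. (\<eta>, \<xi>) \<in> {(a, b). a \<noteq> b \<and> 0 < R a b}\<^sup>*)"

definition jump_prob :: "('a::finite \<Rightarrow> 'a \<Rightarrow> real) \<Rightarrow> 'a \<Rightarrow> 'a \<Rightarrow> real" where
  "jump_prob R \<eta> \<xi> = (if \<xi> = \<eta> then 0 else R \<eta> \<xi> / hold_rate R \<eta>)"

text \<open>hit_exact R A B k z: probability, starting from z, that the jump chain
  hits B for the first time at jump k and has not visited A \<union> B before.\<close>
fun hit_exact :: "('a::finite \<Rightarrow> 'a \<Rightarrow> real) \<Rightarrow> 'a set \<Rightarrow> 'a set \<Rightarrow> nat \<Rightarrow> 'a \<Rightarrow> real" where
  "hit_exact R A B 0 z = (if z \<in> B then 1 else 0)"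
| "hit_exact R A B (Suc k) z =
     (if z \<in> A \<union> B then 0 else (\<Sum>\<xi>\<in>UNIV. jump_prob R z \<xi> * hit_exact R A B k \<xi>))"

text \<open>P_z[H_B < H_A] (hitting times at times >= 0).\<close>
definition hit_before :: "('a::finite \<Rightarrow> 'a \<Rightarrow> real) \<Rightarrow> 'a set \<Rightarrow> 'a set \<Rightarrow> 'a \<Rightarrow> real" where
  "hit_before R A B z = (\<Sum>k. hit_exact R A B k z)"

text \<open>P_eta[H_B < H_A^+], where H_A^+ is the return time to A after the first jump.\<close>
definition escape_prob :: "('a::finite \<Rightarrow> 'a \<Rightarrow> real) \<Rightarrow> 'a set \<Rightarrow> 'a set \<Rightarrow> 'a \<Rightarrow> real" where
  "escape_prob R A B \<eta> = (\<Sum>\<xi>\<in>UNIV. jump_prob R \<eta> \<xi> * hit_before R A B \<xi>)"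

definition is_invariant :: "('a::finite \<Rightarrow> 'a \<Rightarrow> real) \<Rightarrow> ('a \<Rightarrow> real) \<Rightarrow> bool" where
  "is_invariant R \<mu> \<longleftrightarrow> (\<forall>\<eta>. 0 \<le> \<mu> \<eta>) \<and> sum \<mu> UNIV = 1 \<and>
     (\<forall>\<xi>. (\<Sum>\<eta>\<in>UNIV - {\<xi>}. \<mu> \<eta> * R \<eta> \<xi>) = \<mu> \<xi> * hold_rate R \<xi>)"

text \<open>The (unique, for irreducible chains) invariant probability measure.\<close>
definition inv_measure :: "('a::finite \<Rightarrow> 'a \<Rightarrow> real) \<Rightarrow> 'a \<Rightarrow> real" where
  "inv_measure R = (THE \<mu>. is_invariant R \<mu>)"

definition cap :: "('a::finite \<Rightarrow> 'a \<Rightarrow> real) \<Rightarrow> 'a set \<Rightarrow> 'a set \<Rightarrow> real" where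
  "cap R A B = (\<Sum>\<eta>\<in>A. inv_measure R \<eta> * hold_rate R \<eta> * escape_prob R A B \<eta>)"

text \<open>Jump rates of the trace process on F: R^F(eta,xi) = lambda(eta) P_eta[H^+_F = H^+_xi],
  eta \<noteq> xi in F.\<close>
definition trace_rate :: "('a::finite \<Rightarrow> 'a \<Rightarrow> real) \<Rightarrow> 'a set \<Rightarrow> 'a \<Rightarrow> 'a \<Rightarrow> real" where
  "trace_rate R F \<eta> \<xi> = hold_rate R \<eta> * escape_prob R (F - {\<xi>}) {\<xi>} \<eta>"

definition mean_trace_rate :: "('a::finite \<Rightarrow> 'a \<Rightarrow> real) \<Rightarrow> 'a set \<Rightarrow> 'a set \<Rightarrow> 'a set \<Rightarrow> real" where
  "mean_trace_rate R F Sx Sy =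
     (\<Sum>\<eta>\<in>Sx. inv_measure R \<eta> * (\<Sum>\<xi>\<in>Sy. trace_rate R F \<eta> \<xi>)) / (\<Sum>\<eta>\<in>Sx. inv_measure R \<eta>)"

end

theory Submission
  imports Defs
begin

text \<open>Splitting the event that the chain started in \<open>A\<close> reaches \<open>B\<close> before returning to \<open>A\<close>
  according to the point of \<open>B\<close> hit first expresses \<open>Cap(A, B)\<close> through the jump rates of the
  trace process on \<open>A \<union> B\<close>. For \<open>A\<close> the well \<open>x\<close> and \<open>B\<close> the union of the other wells, this
  shows that \<open>Cap(A, B) / \<mu>(A)\<close> is the sum over \<open>y \<noteq> x\<close> of the mean trace rates from well \<open>x\<close>
  to well \<open>y\<close>, hence of order \<open>1/\<theta>\<close> by (H1). By (H2), \<open>Cap(\<eta>, \<xi>) / \<mu>(A)\<close> is at least of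
  order \<open>1/\<alpha>\<close>, so the ratio of the two capacities is \<open>O(\<alpha>/\<theta>)\<close>.\<close>

lemma jump_prob_nonneg: "rates_ok R \<Longrightarrow> 0 \<le> jump_prob R z \<xi>"
  unfolding jump_prob_def rates_ok_def hold_rate_def
  by (auto intro!: divide_nonneg_nonneg sum_nonneg) (metis DiffE singletonI)

lemma sum_jump_prob_le_1: "(\<Sum>\<xi>\<in>UNIV. jump_prob R z \<xi>) \<le> 1"
proof -
  have "(\<Sum>\<xi>\<in>UNIV. jump_prob R z \<xi>) = (\<Sum>\<xi>\<in>UNIV - {z}. jump_prob R z \<xi>)"
    by (rule sum.mono_neutral_right) (auto simp: jump_prob_def)
  also have "\<dots> = (\<Sum>\<xi>\<in>UNIV - {z}. R z \<xi>) / hold_rate R z"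
    by (simp add: jump_prob_def sum_divide_distrib)
  also have "\<dots> \<le> 1"
    by (simp add: hold_rate_def)
  finally show ?thesis .
qed

lemma hit_exact_nonneg: "rates_ok R \<Longrightarrow> 0 \<le> hit_exact R A B k z"
  by (induction k arbitrary: z) (auto intro!: sum_nonneg mult_nonneg_nonneg jump_prob_nonneg)

lemma sum_hit_exact_le_1:
  assumes "rates_ok R"
  shows "(\<Sum>k<K. hit_exact R A B k z) \<le> 1"
proof (induction K arbitrary: z)
  case 0
  then show ?case by simp
next
  case (Suc K)
  have shift: "(\<Sum>k<Suc K. hit_exact R A B k z) =
      hit_exact R A B 0 z + (\<Sum>k<K. hit_exact R A B (Suc k) z)"
    by (rule sum.lessThan_Suc_shift)
  show ?case
  proof (cases "z \<in> A \<union> B")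
    case True
    then show ?thesis
      unfolding shift by auto
  next
    case False
    have "(\<Sum>k<K. hit_exact R A B (Suc k) z) =
        (\<Sum>\<xi>\<in>UNIV. jump_prob R z \<xi> * (\<Sum>k<K. hit_exact R A B k \<xi>))"
      using False by (simp add: sum_distrib_left sum.swap[of _ "{..<K}"])
    also have "\<dots> \<le> (\<Sum>\<xi>\<in>UNIV. jump_prob R z \<xi>)"
      using Suc.IH jump_prob_nonneg[OF assms] hit_exact_nonneg[OF assms]
      by (intro sum_mono mult_right_le_one_le sum_nonneg) auto
    also have "\<dots> \<le> 1"
      by (rule sum_jump_prob_le_1)
    finally show ?thesis
      unfolding shift using False by simp
  qed
qed

lemma summable_hit_exact: "rates_ok R \<Longrightarrow> summable (\<lambda>k. hit_exact R A B k z)"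
  by (rule summableI_nonneg_bounded[where x = 1]) (auto intro: hit_exact_nonneg sum_hit_exact_le_1)

lemma sum_hit_exact_singleton_targets:
  "(\<Sum>\<xi>\<in>B. hit_exact R (A \<union> B - {\<xi>}) {\<xi>} k z) = hit_exact R A B k (z :: 'a :: finite)"
proof (induction k arbitrary: z)
  case 0
  show ?case by (simp add: sum.delta)
next
  case (Suc k)
  have avoid: "(A \<union> B - {\<xi>}) \<union> {\<xi>} = A \<union> B" if "\<xi> \<in> B" for \<xi>
    using that by auto
  have "(\<Sum>\<xi>\<in>B. hit_exact R (A \<union> B - {\<xi>}) {\<xi>} (Suc k) z) =
      (\<Sum>\<xi>\<in>B. if z \<in> A \<union> B then 0
               else \<Sum>\<zeta>\<in>UNIV. jump_prob R z \<zeta> * hit_exact R (A \<union> B - {\<xi>}) {\<xi>} k \<zeta>)"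
    by (intro sum.cong refl) (simp only: hit_exact.simps avoid)
  also have "\<dots> = (if z \<in> A \<union> B then 0
      else \<Sum>\<zeta>\<in>UNIV. jump_prob R z \<zeta> * (\<Sum>\<xi>\<in>B. hit_exact R (A \<union> B - {\<xi>}) {\<xi>} k \<zeta>))"
    by (simp add: sum_distrib_left sum.swap[of _ B])
  also have "\<dots> = hit_exact R A B (Suc k) z"
    by (simp add: Suc.IH)
  finally show ?case .
qed

lemma sum_hit_before_singleton_targets:
  "rates_ok R \<Longrightarrow>
    (\<Sum>\<xi>\<in>B. hit_before R (A \<union> B - {\<xi>}) {\<xi>} z) = hit_before R A B (z :: 'a :: finite)"
  unfolding hit_before_def
  by (subst suminf_sum[symmetric]) (auto intro: summable_hit_exact simp: sum_hit_exact_singleton_targets)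

lemma sum_trace_rate_eq_escape_prob:
  assumes "rates_ok R"
  shows "(\<Sum>\<xi>\<in>B. trace_rate R (A \<union> B) \<eta> \<xi>) = hold_rate R \<eta> * escape_prob R A B (\<eta> :: 'a :: finite)"
proof -
  have "(\<Sum>\<xi>\<in>B. trace_rate R (A \<union> B) \<eta> \<xi>) =
      hold_rate R \<eta> * (\<Sum>\<zeta>\<in>UNIV. jump_prob R \<eta> \<zeta> * (\<Sum>\<xi>\<in>B. hit_before R (A \<union> B - {\<xi>}) {\<xi>} \<zeta>))"
    unfolding trace_rate_def escape_prob_def by (simp add: sum_distrib_left sum.swap[of _ B])
  then show ?thesis
    unfolding escape_prob_def by (simp add: sum_hit_before_singleton_targets[OF assms])
qed

lemma cap_eq_sum_trace_rate:
  "rates_ok R \<Longrightarrow> cap R A B = (\<Sum>\<eta>\<in>A. inv_measure R \<eta> * (\<Sum>\<xi>\<in>B. trace_rate R (A \<union> B) \<eta> \<xi>))"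
  unfolding cap_def by (simp add: sum_trace_rate_eq_escape_prob mult.assoc)

lemma cap_divide_measure_eq_sum_mean_trace_rate:
  assumes "rates_ok R" and "finite I" and "disjoint_family_on B I"
  shows "cap R A (\<Union>i\<in>I. B i) / (\<Sum>\<eta>\<in>A. inv_measure R \<eta>) =
    (\<Sum>i\<in>I. mean_trace_rate R (A \<union> (\<Union>i\<in>I. B i)) A (B i))"
proof -
  let ?F = "A \<union> (\<Union>i\<in>I. B i)"
  have "cap R A (\<Union>i\<in>I. B i) =
      (\<Sum>\<eta>\<in>A. inv_measure R \<eta> * (\<Sum>i\<in>I. \<Sum>\<xi>\<in>B i. trace_rate R ?F \<eta> \<xi>))"
    using assms by (simp add: cap_eq_sum_trace_rate sum.UNION_disjoint_family)
  also have "\<dots> = (\<Sum>i\<in>I. \<Sum>\<eta>\<in>A. inv_measure R \<eta> * (\<Sum>\<xi>\<in>B i. trace_rate R ?F \<eta> \<xi>))"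
    by (simp add: sum_distrib_left sum.swap[of _ A])
  finally show ?thesis
    unfolding mean_trace_rate_def by (simp add: sum_divide_distrib)
qed

lemma tendsto_zero_divide_Liminf_pos:
  fixes f g :: "nat \<Rightarrow> real"
  assumes f: "f \<longlonglongrightarrow> 0" and g: "Liminf sequentially (\<lambda>N. ereal (g N)) > 0"
  shows "(\<lambda>N. f N / g N) \<longlonglongrightarrow> 0"
proof -
  obtain c where c: "0 < c" and "ereal c < Liminf sequentially (\<lambda>N. ereal (g N))"
    using ereal_dense2[OF g] by auto
  from less_LiminfD[OF this(2)] have ev: "eventually (\<lambda>N. c < g N) sequentially"
    by simp
  have "eventually (\<lambda>N. norm (f N / g N) \<le> \<bar>f N\<bar> / c) sequentially"
    using ev by eventually_elim (use c in \<open>auto simp: abs_divide intro!: divide_left_mono\<close>)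
  moreover have "(\<lambda>N. \<bar>f N\<bar> / c) \<longlonglongrightarrow> 0"
    using tendsto_divide[OF tendsto_rabs[OF f] tendsto_const[of c]] c by simp
  ultimately show ?thesis
    by (rule Lim_null_comparison)
qed

lemma ratio_tendsto_zero_of_separated_scales:
  fixes a b m \<alpha> \<theta> :: "nat \<Rightarrow> real"
  assumes a: "(\<lambda>N. \<theta> N * (a N / m N)) \<longlonglongrightarrow> L"
    and scales: "(\<lambda>N. \<alpha> N / \<theta> N) \<longlonglongrightarrow> 0"
    and b: "Liminf sequentially (\<lambda>N. ereal (\<alpha> N * b N / m N)) > 0"
    and pos: "eventually (\<lambda>N. 0 < \<alpha> N \<and> 0 < \<theta> N) sequentially"
  shows "(\<lambda>N. a N / b N) \<longlonglongrightarrow> 0"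
proof -
  from tendsto_mult[OF a scales]
  have "(\<lambda>N. \<theta> N * (a N / m N) * (\<alpha> N / \<theta> N) / (\<alpha> N * b N / m N)) \<longlonglongrightarrow> 0"
    by (intro tendsto_zero_divide_Liminf_pos b) simp
  moreover have "eventually (\<lambda>N. 0 < \<alpha> N * b N / m N) sequentially"
    using less_LiminfD[OF b] by simp
  with pos have "eventually (\<lambda>N.
      \<theta> N * (a N / m N) * (\<alpha> N / \<theta> N) / (\<alpha> N * b N / m N) = a N / b N) sequentially"
    by eventually_elim (auto simp: field_simps)
  ultimately show ?thesis
    by (rule Lim_transform_eventually)
qed

theorem lemma6p2:
  fixes R :: "nat \<Rightarrow> 'a::finite \<Rightarrow> 'a \<Rightarrow> real"
    and n :: nat
    and Ecal :: "nat \<Rightarrow> 'a set"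
    and Delta :: "'a set"
    and \<alpha> \<theta> :: "nat \<Rightarrow> real"
  assumes chain: "\<And>N. N \<ge> 1 \<Longrightarrow> rates_ok (R N) \<and> irreducible_rates (R N)"
    and n2: "n \<ge> 2"
    and parts_ne: "\<And>x. x \<in> {1..n} \<Longrightarrow> Ecal x \<noteq> {}"
    and parts_disj: "\<And>x y. x \<in> {1..n} \<Longrightarrow> y \<in> {1..n} \<Longrightarrow> x \<noteq> y \<Longrightarrow> Ecal x \<inter> Ecal y = {}"
    and delta_disj: "\<And>x. x \<in> {1..n} \<Longrightarrow> Ecal x \<inter> Delta = {}"
    and cover: "(\<Union>x\<in>{1..n}. Ecal x) \<union> Delta = UNIV"
    and \<alpha>_pos: "\<And>N. N \<ge> 1 \<Longrightarrow> 0 < \<alpha> N"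
    and \<theta>_pos: "\<And>N. N \<ge> 1 \<Longrightarrow> 0 < \<theta> N"
    and ratio: "(\<lambda>N. \<alpha> N / \<theta> N) \<longlonglongrightarrow> 0"
    and H1: "\<exists>r :: nat \<Rightarrow> nat \<Rightarrow> real.
              (\<forall>x\<in>{1..n}. \<forall>y\<in>{1..n}. x \<noteq> y \<longrightarrow>
                 (\<lambda>N. \<theta> N * mean_trace_rate (R N) (\<Union>z\<in>{1..n}. Ecal z) (Ecal x) (Ecal y))
                   \<longlonglongrightarrow> r x y)
              \<and> (\<Sum>x\<in>{1..n}. \<Sum>y\<in>{1..n} - {x}. r x y) > 0"
    and H2: "\<And>x \<eta> \<xi>. x \<in> {1..n} \<Longrightarrow> card (Ecal x) \<ge> 2 \<Longrightarrow> \<eta> \<in> Ecal x \<Longrightarrow> \<xi> \<in> Ecal x \<Longrightarrow>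
              \<eta> \<noteq> \<xi> \<Longrightarrow>
              Liminf sequentially (\<lambda>N. ereal (\<alpha> N * cap (R N) {\<eta>} {\<xi>}
                                         / (\<Sum>\<zeta>\<in>Ecal x. inv_measure (R N) \<zeta>))) > 0"
  shows "\<And>x \<eta> \<xi>. x \<in> {1..n} \<Longrightarrow> card (Ecal x) \<ge> 2 \<Longrightarrow> \<eta> \<in> Ecal x \<Longrightarrow> \<xi> \<in> Ecal x \<Longrightarrow>
           \<eta> \<noteq> \<xi> \<Longrightarrow>
           (\<lambda>N. cap (R N) (Ecal x) (\<Union>y\<in>{1..n} - {x}. Ecal y) / cap (R N) {\<eta>} {\<xi>})
             \<longlonglongrightarrow> 0"
proof -
  fix x \<eta> \<xi>
  assume x: "x \<in> {1..n}" and "card (Ecal x) \<ge> 2" and "\<eta> \<in> Ecal x" and "\<xi> \<in> Ecal x"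
    and "\<eta> \<noteq> \<xi>"
  obtain r where r: "\<forall>x\<in>{1..n}. \<forall>y\<in>{1..n}. x \<noteq> y \<longrightarrow>
      (\<lambda>N. \<theta> N * mean_trace_rate (R N) (\<Union>z\<in>{1..n}. Ecal z) (Ecal x) (Ecal y)) \<longlonglongrightarrow> r x y"
    using H1 by blast
  let ?B = "\<Union>y\<in>{1..n} - {x}. Ecal y"
  define m where "m N = (\<Sum>\<zeta>\<in>Ecal x. inv_measure (R N) \<zeta>)" for N
  have lower: "Liminf sequentially (\<lambda>N. ereal (\<alpha> N * cap (R N) {\<eta>} {\<xi>} / m N)) > 0"
    unfolding m_def by (rule H2) fact+
  have F: "Ecal x \<union> ?B = (\<Union>z\<in>{1..n}. Ecal z)"
    using x by auto
  have disj: "disjoint_family_on Ecal ({1..n} - {x})"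
    using parts_disj by (auto simp: disjoint_family_on_def)
  have escape: "cap (R N) (Ecal x) ?B / m N =
      (\<Sum>y\<in>{1..n} - {x}. mean_trace_rate (R N) (\<Union>z\<in>{1..n}. Ecal z) (Ecal x) (Ecal y))"
    if "N \<ge> 1" for N
    unfolding m_def F[symmetric] using chain[OF that]
    by (intro cap_divide_measure_eq_sum_mean_trace_rate disj) auto
  have "(\<lambda>N. \<theta> N * (\<Sum>y\<in>{1..n} - {x}.
      mean_trace_rate (R N) (\<Union>z\<in>{1..n}. Ecal z) (Ecal x) (Ecal y)))
      \<longlonglongrightarrow> (\<Sum>y\<in>{1..n} - {x}. r x y)"
    unfolding sum_distrib_left using r x by (intro tendsto_sum) auto
  then have cap_lim: "(\<lambda>N. \<theta> N * (cap (R N) (Ecal x) ?B / m N)) \<longlonglongrightarrow> (\<Sum>y\<in>{1..n} - {x}. r x y)"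
    by (rule Lim_transform_eventually)
      (use eventually_ge_at_top[of "1::nat"] in \<open>eventually_elim, simp only: escape\<close>)
  have "eventually (\<lambda>N. 0 < \<alpha> N \<and> 0 < \<theta> N) sequentially"
    using eventually_ge_at_top[of 1] by eventually_elim (simp add: \<alpha>_pos \<theta>_pos)
  then show "(\<lambda>N. cap (R N) (Ecal x) ?B / cap (R N) {\<eta>} {\<xi>}) \<longlonglongrightarrow> 0"
    by (rule ratio_tendsto_zero_of_separated_scales[OF cap_lim ratio lower])
qed

end
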